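(* Let $R$ be a commutative Noetherian ring of prime characteristic $p$ and let $G$ be an $x$-torsion-free left $R[x,f]$-module. Then there is a radical ideal $\mathfrak{b}$ of $R$ such that $\operatorname{grann}_{R[x,f]}G=\mathfrak{b}R[x,f]=\bigoplus_{n\ge0}\mathfrak{b}x^n$.
   Context: $R[x,f]$ is the Frobenius skew polynomial ring: free left $R$-module on $(x^i)_{i\ge0}$, with $xr=r^px$. $G$ is $x$-torsion-free if $xg=0$ implies $g=0$. $\operatorname{grann}_{R[x,f]}G$ is the set of $\sum r_ix^i\in R[x,f]$ such that each $r_ix^i$ annihilates $G$. *)

theory Defs
  imports Main "HOL.Modules" "HOL-Computational_Algebra.Primes"
begin

definition is_ideal :: "'a::comm_ring_1 set \<Rightarrow> bool" where
  "is_ideal I \<longleftrightarrow> 0 \<in> I \<and> (\<forall>a\<in>I. \<forall>b\<in>I. a + b \<in> I) \<and> (\<forall>r. \<forall>a\<in>I. r * a \<in> I)"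

definition radical_ideal :: "'a::comm_ring_1 set \<Rightarrow> bool" where
  "radical_ideal I \<longleftrightarrow> is_ideal I \<and> (\<forall>r (n::nat). n > 0 \<longrightarrow> r ^ n \<in> I \<longrightarrow> r \<in> I)"

definition noetherian_ring :: "'a::comm_ring_1 itself \<Rightarrow> bool" where
  "noetherian_ring _ \<longleftrightarrow>
     (\<forall>I :: nat \<Rightarrow> 'a set. (\<forall>n. is_ideal (I n)) \<longrightarrow> (\<forall>n. I n \<subseteq> I (Suc n)) \<longrightarrow>
        (\<exists>N. \<forall>n\<ge>N. I n = I N))"

text \<open>Elements of the Frobenius skew polynomial ring R[x,f]: the free left R-module
  on (x^i), represented by finitely supported coefficient sequences
  (c represents the sum of c i x^i).\<close>
definition skew_elems :: "(nat \<Rightarrow> 'a::zero) set" where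
  "skew_elems = {c. finite {i. c i \<noteq> 0}}"

text \<open>A left R[x,f]-module structure on an R-module G (scalar multiplication scale)
  is given by the action phi of x: an additive map with phi (r g) = r^p phi g.\<close>
definition frob_module :: "('a::comm_ring_1 \<Rightarrow> 'g::ab_group_add \<Rightarrow> 'g) \<Rightarrow> nat \<Rightarrow> ('g \<Rightarrow> 'g) \<Rightarrow> bool" where
  "frob_module scale p phi \<longleftrightarrow> module scale \<and>
     (\<forall>g h. phi (g + h) = phi g + phi h) \<and>
     (\<forall>r g. phi (scale r g) = scale (r ^ p) (phi g))"

definition x_torsion_free :: "('g::ab_group_add \<Rightarrow> 'g) \<Rightarrow> bool" where
  "x_torsion_free phi \<longleftrightarrow> (\<forall>g. phi g = 0 \<longrightarrow> g = 0)"

text \<open>Graded annihilator: sums of r_i x^i with each r_i x^i annihilating G;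
  (r x^i) acts on g as r (phi^i g).\<close>
definition grann :: "('a::comm_ring_1 \<Rightarrow> 'g::ab_group_add \<Rightarrow> 'g) \<Rightarrow> ('g \<Rightarrow> 'g) \<Rightarrow> (nat \<Rightarrow> 'a) set" where
  "grann scale phi = {c \<in> skew_elems. \<forall>i g. scale (c i) ((phi ^^ i) g) = 0}"

text \<open>The extension b R[x,f]: finite sums of products b_j h_j with b_j in b, h_j in R[x,f]
  (left multiplication by an element of R acts coefficientwise).\<close>
definition ext_ideal :: "'a::comm_ring_1 set \<Rightarrow> (nat \<Rightarrow> 'a) set" where
  "ext_ideal b = {c. \<exists>n (bs :: nat \<Rightarrow> 'a) hs. (\<forall>j<n. bs j \<in> b \<and> hs j \<in> skew_elems) \<and>
                       c = (\<lambda>i. \<Sum>j<n. bs j * hs j i)}"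

definition graded_ideal :: "'a::comm_ring_1 set \<Rightarrow> (nat \<Rightarrow> 'a) set" where
  "graded_ideal b = {c \<in> skew_elems. \<forall>i. c i \<in> b}"

end

theory Submission
  imports Defs
begin

(* The ideal is the annihilator b of G over R. If r x^i kills G, then
   x^i (r g) = r^(p^i) x^i g = r^(p^i - 1) (r x^i g) = 0, so r g = 0 by x-torsion-freeness;
   hence every homogeneous component of the graded annihilator lies in b. Likewise
   r^n G = 0 gives x^n (r g) = r^(p^n - n) r^n x^n g = 0 because n \<le> p^n, so b is radical. *)

lemma frob_module_funpow_scale:
  assumes "frob_module scale p phi"
  shows "(phi ^^ i) (scale r g) = scale (r ^ (p ^ i)) ((phi ^^ i) g)"
proof (induction i)
  case 0
  then show ?case using assms unfolding frob_module_def by (simp add: module.scale_one)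
next
  case (Suc i)
  have "(phi ^^ Suc i) (scale r g) = phi (scale (r ^ (p ^ i)) ((phi ^^ i) g))"
    using Suc by simp
  also have "\<dots> = scale ((r ^ (p ^ i)) ^ p) ((phi ^^ Suc i) g)"
    using assms unfolding frob_module_def by simp
  also have "(r ^ (p ^ i)) ^ p = r ^ (p ^ Suc i)"
    by (simp add: power_mult[symmetric] mult.commute)
  finally show ?case .
qed

lemma x_torsion_free_funpow:
  assumes "x_torsion_free phi" and "(phi ^^ i) g = 0"
  shows "g = 0"
  using assms(2)
proof (induction i arbitrary: g)
  case 0
  then show ?case by simp
next
  case (Suc i)
  then have "phi g = 0" by (simp add: funpow_swap1)
  then show ?case using assms(1) unfolding x_torsion_free_def by blast
qed

lemma frob_module_scale_eq_0_if_power_kills_image: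
  assumes fm: "frob_module scale p phi" and tf: "x_torsion_free phi"
    and "n \<le> p ^ i" and kills: "\<And>g. scale (r ^ n) ((phi ^^ i) g) = 0"
  shows "scale r g = 0"
proof -
  have m: "module scale" using fm unfolding frob_module_def by blast
  have "r ^ (p ^ i) = r ^ (p ^ i - n) * r ^ n"
    using \<open>n \<le> p ^ i\<close> by (simp add: power_add[symmetric])
  then have "(phi ^^ i) (scale r g) = scale (r ^ (p ^ i - n)) (scale (r ^ n) ((phi ^^ i) g))"
    using frob_module_funpow_scale[OF fm] module.scale_scale[OF m] by metis
  also have "\<dots> = 0" using kills module.scale_zero_right[OF m] by simp
  finally show ?thesis using x_torsion_free_funpow[OF tf] by blast
qed

definition module_ann :: "('a::comm_ring_1 \<Rightarrow> 'g::ab_group_add \<Rightarrow> 'g) \<Rightarrow> 'a set" where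
  "module_ann scale = {r. \<forall>g. scale r g = 0}"

lemma is_ideal_module_ann:
  assumes "module scale"
  shows "is_ideal (module_ann scale)"
  unfolding is_ideal_def module_ann_def
  using module.scale_zero_left[OF assms] module.scale_left_distrib[OF assms]
    module.scale_scale[OF assms, symmetric] module.scale_zero_right[OF assms]
  by auto

lemma radical_ideal_module_ann:
  assumes fm: "frob_module scale p phi" and tf: "x_torsion_free phi" and "p \<ge> 2"
  shows "radical_ideal (module_ann scale)"
  unfolding radical_ideal_def
proof (intro conjI allI impI)
  show "is_ideal (module_ann scale)"
    using fm is_ideal_module_ann unfolding frob_module_def by blast
next
  fix r :: 'a and n :: nat
  assume "r ^ n \<in> module_ann scale"
  then have kills: "scale (r ^ n) ((phi ^^ n) g) = 0" for g
    unfolding module_ann_def by blast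
  have "n < 2 ^ n" by (rule less_exp)
  also have "(2::nat) ^ n \<le> p ^ n" using \<open>p \<ge> 2\<close> by (rule power_mono) simp
  finally have "n \<le> p ^ n" by simp
  then show "r \<in> module_ann scale"
    unfolding module_ann_def
    using frob_module_scale_eq_0_if_power_kills_image[OF fm tf _ kills] by blast
qed

lemma grann_eq_graded_ideal_module_ann:
  assumes fm: "frob_module scale p phi" and tf: "x_torsion_free phi" and "p > 0"
  shows "grann scale phi = graded_ideal (module_ann scale)"
proof (intro set_eqI iffI)
  fix c assume c: "c \<in> grann scale phi"
  have "c i \<in> module_ann scale" for i
  proof -
    have kills: "scale (c i ^ 1) ((phi ^^ i) g) = 0" for g
      using c unfolding grann_def by simp
    have "1 \<le> p ^ i" using \<open>p > 0\<close> by simp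
    then show ?thesis
      unfolding module_ann_def
      using frob_module_scale_eq_0_if_power_kills_image[OF fm tf _ kills] by blast
  qed
  then show "c \<in> graded_ideal (module_ann scale)"
    using c unfolding grann_def graded_ideal_def by simp
next
  fix c assume "c \<in> graded_ideal (module_ann scale)"
  then show "c \<in> grann scale phi"
    unfolding grann_def graded_ideal_def module_ann_def by simp
qed

lemma is_ideal_sum_mem:
  assumes "is_ideal I" and "\<And>j. j \<in> A \<Longrightarrow> f j \<in> I"
  shows "sum f A \<in> I"
  using assms(2)
proof (induction A rule: infinite_finite_induct)
  case (insert j A)
  then show ?case using assms(1) unfolding is_ideal_def by simp
qed (use assms(1) in \<open>simp_all add: is_ideal_def\<close>)

lemma skew_elems_left_combination:
  fixes hs :: "nat \<Rightarrow> nat \<Rightarrow> 'a::semiring_0"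
  assumes "\<And>j. j < n \<Longrightarrow> hs j \<in> skew_elems"
  shows "(\<lambda>i. \<Sum>j<n. bs j * hs j i) \<in> skew_elems"
proof -
  have "(\<Sum>j<n. bs j * hs j i) = 0" if "i \<notin> (\<Union>j<n. {i. hs j i \<noteq> 0})" for i
    using that by simp
  then have "{i. (\<Sum>j<n. bs j * hs j i) \<noteq> 0} \<subseteq> (\<Union>j<n. {i. hs j i \<noteq> 0})"
    by blast
  moreover have "finite (\<Union>j<n. {i. hs j i \<noteq> 0})"
    using assms unfolding skew_elems_def by auto
  ultimately show ?thesis
    unfolding skew_elems_def by (auto intro: finite_subset)
qed

lemma ext_ideal_subset_graded_ideal:
  assumes "is_ideal b"
  shows "ext_ideal b \<subseteq> graded_ideal b"
proof
  fix c assume "c \<in> ext_ideal b"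
  then obtain n :: nat and bs hs :: "nat \<Rightarrow> _" where h: "\<forall>j<n. bs j \<in> b \<and> hs j \<in> skew_elems"
    and c: "c = (\<lambda>i. \<Sum>j<n. bs j * hs j i)"
    unfolding ext_ideal_def by auto
  have "hs j i * bs j \<in> b" if "j < n" for i j
    using assms h that unfolding is_ideal_def by blast
  then have "bs j * hs j i \<in> b" if "j < n" for i j
    using that by (simp add: mult.commute)
  then have "c i \<in> b" for i
    unfolding c using assms by (auto intro!: is_ideal_sum_mem)
  moreover have "c \<in> skew_elems"
    unfolding c using h by (intro skew_elems_left_combination) simp
  ultimately show "c \<in> graded_ideal b"
    unfolding graded_ideal_def by simp
qed

lemma graded_ideal_subset_ext_ideal: "graded_ideal b \<subseteq> ext_ideal b"
proof
  fix c assume c: "c \<in> graded_ideal b"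
  then obtain N where N: "\<And>i. c i \<noteq> 0 \<Longrightarrow> i < N"
    unfolding graded_ideal_def skew_elems_def finite_nat_set_iff_bounded by blast
  define monomial :: "nat \<Rightarrow> nat \<Rightarrow> 'a" where "monomial = (\<lambda>j i. if i = j then 1 else 0)"
  have "monomial j \<in> skew_elems" for j
    unfolding monomial_def skew_elems_def by (simp add: finite_subset[of _ "{j}"])
  moreover have "c = (\<lambda>i. \<Sum>j<N. c j * monomial j i)"
  proof
    fix i
    have "(\<Sum>j<N. c j * monomial j i) = (if i < N then c i else 0)"
      unfolding monomial_def by (simp add: sum.delta' if_distrib cong: if_cong)
    then show "c i = (\<Sum>j<N. c j * monomial j i)" using N by auto
  qed
  ultimately show "c \<in> ext_ideal b"
    using c unfolding ext_ideal_def graded_ideal_def by blast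
qed

theorem lemma1p9:
  fixes scale :: "'a::comm_ring_1 \<Rightarrow> 'g::ab_group_add \<Rightarrow> 'g"
    and phi :: "'g \<Rightarrow> 'g" and p :: nat
  assumes "noetherian_ring TYPE('a)"
    and "prime p" and "CHAR('a) = p"
    and "frob_module scale p phi"
    and "x_torsion_free phi"
  shows "\<exists>b :: 'a set. radical_ideal b \<and> grann scale phi = ext_ideal b
            \<and> ext_ideal b = graded_ideal b"
proof (intro exI conjI)
  have "p \<ge> 2" using \<open>prime p\<close> by (rule prime_ge_2_nat)
  show "radical_ideal (module_ann scale)"
    using radical_ideal_module_ann assms(4,5) \<open>p \<ge> 2\<close> by blast
  then have "is_ideal (module_ann scale)" unfolding radical_ideal_def by blast
  then show ext: "ext_ideal (module_ann scale) = graded_ideal (module_ann scale)"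
    using ext_ideal_subset_graded_ideal graded_ideal_subset_ext_ideal by blast
  have "grann scale phi = graded_ideal (module_ann scale)"
    using grann_eq_graded_ideal_module_ann[OF assms(4,5)] \<open>p \<ge> 2\<close> by simp
  then show "grann scale phi = ext_ideal (module_ann scale)" using ext by simp
qed

end
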